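(* Let $G=(V,E)$ be a finite simple undirected graph, $G_0:=G$, and let $W_1,\dots,W_r$ be distinct subsets of $V$ such that for every $t\in\{1,\dots,r\}$, $W_t$ is a clique of $G_{t-1}$ with $|W_t|\ge2$ and $G_t:=G_{t-1}\mid W_t$. Let $F_0:=STAB(G)$ and $F_t:=\{x\in STAB(G)\mid x_{W_j}=1,\ j=1,\dots,t\}$ for $t\in\{1,\dots,r\}$. Then $F_t\subseteq STAB(G_t)$ for all $t\in\{0,\dots,r\}$.
   Context: For a graph $G=(V,E)$, $\mathcal S(G)\subseteq\{0,1\}^V$ is the set of characteristic vectors of stable sets of $G$, and $STAB(G)=\mathrm{conv}\,\mathcal S(G)$. For $W\subseteq V$ and $x\in\mathbb R^V$, $x_W=\sum_{v\in W}x_v$. The clique projection of a clique $W$ ($|W|\ge2$) of a graph $H=(V,E_H)$ is $H\mid W=(V,E_H\cup\{uv\notin E_H\mid u\ne v,\ W\subseteq N_H(u)\cup N_H(v)\})$, where $N_H(u)$ is the neighborhood of $u$ in $H$. *)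

theory Defs
  imports "HOL-Analysis.Analysis"
begin

text \<open>Finite simple graphs on the vertex set V = UNIV of a finite type 'n;
  edges are 2-element subsets of V.  Vectors in R^V are of type real ^ 'n.\<close>

definition simple_graph :: "'n set set \<Rightarrow> bool" where
  "simple_graph E \<longleftrightarrow> (\<forall>e\<in>E. card e = 2)"

definition nbhd :: "'n set set \<Rightarrow> 'n \<Rightarrow> 'n set" where
  "nbhd E u = {w. {u, w} \<in> E}"

definition is_clique :: "'n set set \<Rightarrow> 'n set \<Rightarrow> bool" where
  "is_clique E W \<longleftrightarrow> (\<forall>u\<in>W. \<forall>v\<in>W. u \<noteq> v \<longrightarrow> {u, v} \<in> E)"

definition is_stable :: "'n set set \<Rightarrow> 'n set \<Rightarrow> bool" where
  "is_stable E S \<longleftrightarrow> (\<forall>u\<in>S. \<forall>v\<in>S. u \<noteq> v \<longrightarrow> {u, v} \<notin> E)"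

definition char_vec :: "'n::finite set \<Rightarrow> real ^ 'n" where
  "char_vec S = (\<chi> v. if v \<in> S then 1 else 0)"

definition STAB :: "'n::finite set set \<Rightarrow> (real ^ 'n) set" where
  "STAB E = convex hull (char_vec ` {S. is_stable E S})"

definition wsum :: "real ^ 'n \<Rightarrow> 'n::finite set \<Rightarrow> real" where
  "wsum x W = (\<Sum>v\<in>W. x $ v)"

definition clique_proj :: "'n set set \<Rightarrow> 'n set \<Rightarrow> 'n set set" where
  "clique_proj E W = E \<union> {{u, v} | u v. {u, v} \<notin> E \<and> u \<noteq> v \<and> W \<subseteq> nbhd E u \<union> nbhd E v}"

fun proj_seq :: "'n set set \<Rightarrow> (nat \<Rightarrow> 'n set) \<Rightarrow> nat \<Rightarrow> 'n set set" where
  "proj_seq E W 0 = E"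
| "proj_seq E W (Suc t) = clique_proj (proj_seq E W t) (W (Suc t))"

end

theory Submission
  imports Defs
begin

text \<open>Let W be a clique of H. Every stable set of H meets W in at most one vertex, so
  x_W \<le> 1 is valid for STAB(H) and {x \<in> STAB(H). x_W = 1} is the convex hull of the
  stable sets meeting W in exactly one vertex w. Such a set S stays stable in H | W: a new
  edge uv of H | W with u, v \<in> S would force w to be adjacent to u or v. Hence this face lies
  in STAB(H | W), and induction along the sequence of projections gives the theorem.\<close>

lemma convex_hull_Int_supporting_hyperplane:
  fixes P :: "'a::euclidean_space set"
  assumes "compact P" and le: "\<And>p. p \<in> P \<Longrightarrow> a \<bullet> p \<le> b"
  shows "convex hull P \<inter> {x. a \<bullet> x = b} = convex hull {p \<in> P. a \<bullet> p = b}"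
proof
  have "convex hull P \<subseteq> {x. a \<bullet> x \<le> b}"
    using le by (intro hull_minimal) (auto simp: convex_halfspace_le)
  then have "convex hull P \<inter> {x. a \<bullet> x = b} face_of convex hull P"
    by (intro face_of_Int_supporting_hyperplane_le) auto
  then obtain P' where P': "P' \<subseteq> P" "convex hull P \<inter> {x. a \<bullet> x = b} = convex hull P'"
    using face_of_convex_hull_subset[OF \<open>compact P\<close>] by metis
  then have "P' \<subseteq> {p \<in> P. a \<bullet> p = b}"
    using hull_subset[of P' convex] by auto
  then show "convex hull P \<inter> {x. a \<bullet> x = b} \<subseteq> convex hull {p \<in> P. a \<bullet> p = b}"
    using P'(2) hull_mono by metis
next
  have "convex hull {p \<in> P. a \<bullet> p = b} \<subseteq> {x. a \<bullet> x = b}"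
    by (intro hull_minimal) (auto simp: convex_hyperplane)
  then show "convex hull {p \<in> P. a \<bullet> p = b} \<subseteq> convex hull P \<inter> {x. a \<bullet> x = b}"
    using hull_mono[of "{p \<in> P. a \<bullet> p = b}" P] by auto
qed

lemma wsum_eq_inner_char_vec: "wsum x W = char_vec W \<bullet> x"
  unfolding wsum_def char_vec_def inner_vec_def
  by (simp add: if_distrib[of "\<lambda>c. c * _"] sum.If_cases)

lemma wsum_char_vec: "wsum (char_vec S) W = real (card (W \<inter> S))"
  by (simp add: wsum_def char_vec_def sum.If_cases)

lemma card_clique_Int_stable_le_1:
  assumes "is_clique H W" "is_stable H S" "finite W"
  shows "card (W \<inter> S) \<le> 1"
  using assms unfolding is_clique_def is_stable_def
  by (simp add: card_le_Suc0_iff_eq) blast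

lemma simple_graph_clique_proj:
  assumes "simple_graph H"
  shows "simple_graph (clique_proj H W)"
  using assms unfolding simple_graph_def clique_proj_def by auto

lemma simple_graph_proj_seq:
  assumes "simple_graph E"
  shows "simple_graph (proj_seq E W t)"
  by (induction t) (simp_all add: assms simple_graph_clique_proj)

lemma is_stable_clique_proj:
  assumes H: "simple_graph H" and S: "is_stable H S" and WS: "card (W \<inter> S) = 1"
  shows "is_stable (clique_proj H W) S"
  unfolding is_stable_def
proof (intro ballI impI notI)
  fix u v assume uv: "u \<in> S" "v \<in> S" "u \<noteq> v" and new: "{u, v} \<in> clique_proj H W"
  obtain w where w: "w \<in> W" "w \<in> S"
    using WS by (metis card_1_singletonE insert_subset inf_le1 inf_le2)
  have not_adj: "{y, w} \<notin> H" if "y \<in> S" for y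
  proof (cases "y = w")
    case True
    then show ?thesis using H unfolding simple_graph_def by force
  qed (use S that w in \<open>auto simp: is_stable_def\<close>)
  have "{u, v} \<notin> H"
    using S uv unfolding is_stable_def by blast
  with new have "W \<subseteq> nbhd H u \<union> nbhd H v"
    unfolding clique_proj_def by (auto simp: doubleton_eq_iff)
  then show False
    using w(1) not_adj uv by (auto simp: nbhd_def)
qed

lemma STAB_clique_face_subset_STAB_clique_proj:
  assumes "simple_graph H" and "is_clique H W"
  shows "{x \<in> STAB H. wsum x W = 1} \<subseteq> STAB (clique_proj H W)"
proof -
  define P where "P = char_vec ` {S. is_stable H S}"
  have "compact P"
    unfolding P_def by (simp add: finite_imp_compact)
  have P_le: "char_vec W \<bullet> p \<le> 1" if "p \<in> P" for p
    using that card_clique_Int_stable_le_1[OF \<open>is_clique H W\<close>]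
    by (auto simp: P_def wsum_char_vec simp flip: wsum_eq_inner_char_vec)
  have "{p \<in> P. char_vec W \<bullet> p = 1} \<subseteq> char_vec ` {S. is_stable (clique_proj H W) S}"
    using is_stable_clique_proj[OF \<open>simple_graph H\<close>]
    by (auto simp: P_def wsum_char_vec simp flip: wsum_eq_inner_char_vec)
  then have "convex hull {p \<in> P. char_vec W \<bullet> p = 1} \<subseteq> STAB (clique_proj H W)"
    unfolding STAB_def by (rule hull_mono)
  moreover have "{x \<in> STAB H. wsum x W = 1} = convex hull P \<inter> {x. char_vec W \<bullet> x = 1}"
    by (auto simp: STAB_def P_def wsum_eq_inner_char_vec)
  ultimately show ?thesis
    using convex_hull_Int_supporting_hyperplane[OF \<open>compact P\<close> P_le] by simp
qed

theorem lemma5: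
  fixes E :: "'n::finite set set" and W :: "nat \<Rightarrow> 'n set" and r :: nat
  assumes "simple_graph E"
    and "inj_on W {1..r}"
    and "\<And>t. t \<in> {1..r} \<Longrightarrow> is_clique (proj_seq E W (t - 1)) (W t) \<and> card (W t) \<ge> 2"
  shows "\<forall>t\<in>{0..r}. {x \<in> STAB E. \<forall>j\<in>{1..t}. wsum x (W j) = 1} \<subseteq> STAB (proj_seq E W t)"
proof
  fix t assume "t \<in> {0..r}"
  then show "{x \<in> STAB E. \<forall>j\<in>{1..t}. wsum x (W j) = 1} \<subseteq> STAB (proj_seq E W t)"
  proof (induction t)
    case (Suc t)
    have "is_clique (proj_seq E W t) (W (Suc t))"
      using assms(3)[of "Suc t"] Suc.prems by simp
    then have "{x \<in> STAB (proj_seq E W t). wsum x (W (Suc t)) = 1} \<subseteq> STAB (proj_seq E W (Suc t))"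
      unfolding proj_seq.simps
      by (rule STAB_clique_face_subset_STAB_clique_proj[OF simple_graph_proj_seq[OF assms(1)]])
    then show ?case
      using Suc.IH Suc.prems by fastforce
  qed simp
qed

end
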